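(* Let $\kappa_2$ be an infinite regular cardinal with $\kappa_2<\mathfrak b$. Then there is no $(\aleph_0,\kappa_2)$-peculiar cut in ${}^\omega\omega$.
   Context: For $f,g\in{}^\omega\omega$: $f\le^*g$ iff $f(n)\le g(n)$ for all but finitely many $n$; $f<^*g$ iff $f(n)<g(n)$ for all but finitely many $n$. $\mathfrak b$ is the least size of a family $F\subseteq{}^\omega\omega$ with no $g$ such that $f\le^*g$ for all $f\in F$. For infinite regular cardinals $\kappa_1,\kappa_2$, a $(\kappa_1,\kappa_2)$-peculiar cut in ${}^\omega\omega$ is a pair $(\langle f_i:i<\kappa_1\rangle,\langle f^\alpha:\alpha<\kappa_2\rangle)$ of sequences in ${}^\omega\omega$ such that: ($\alpha$) $f_j<^*f_i$ for $i<j<\kappa_1$; ($\beta$) $f^\alpha<^*f^\beta$ for $\alpha<\beta<\kappa_2$; ($\gamma$) $f^\alpha<^*f_i$ for all $i<\kappa_1$, $\alpha<\kappa_2$; ($\delta$) if $f\in{}^\omega\omega$ and $f\le^*f_i$ for all $i<\kappa_1$, then $f\le^*f^\alpha$ for some $\alpha<\kappa_2$; ($\varepsilon$) if $f\in{}^\omega\omega$ and $f^\alpha\le^*f$ for all $\alpha<\kappa_2$, then $f_i\le^*f$ for some $i<\kappa_1$. *)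

theory Defs
  imports Main
begin

definition le_star :: "(nat \<Rightarrow> nat) \<Rightarrow> (nat \<Rightarrow> nat) \<Rightarrow> bool" where
  "le_star f g \<longleftrightarrow> finite {n. \<not> f n \<le> g n}"

definition less_star :: "(nat \<Rightarrow> nat) \<Rightarrow> (nat \<Rightarrow> nat) \<Rightarrow> bool" where
  "less_star f g \<longleftrightarrow> finite {n. \<not> f n < g n}"

definition unbounded_family :: "(nat \<Rightarrow> nat) set \<Rightarrow> bool" where
  "unbounded_family F \<longleftrightarrow> \<not> (\<exists>g. \<forall>f\<in>F. le_star f g)"

text \<open>kappa < b: kappa is strictly below the cardinality of every unbounded family
  (i.e. below the least such cardinality).\<close>
definition less_than_b :: "'k rel \<Rightarrow> bool" where
  "less_than_b \<kappa> \<longleftrightarrow> (\<forall>F. unbounded_family F \<longrightarrow> (\<kappa>, card_of F) \<in> ordLess)"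

text \<open>Peculiar cut: cardinals kappa1, kappa2 are given as (cardinal) well-orders r1, r2;
  sequences are indexed by the fields of r1, r2; i < j means (i,j) \<in> r and i \<noteq> j.\<close>
definition peculiar_cut ::
  "'a rel \<Rightarrow> 'b rel \<Rightarrow> ('a \<Rightarrow> nat \<Rightarrow> nat) \<Rightarrow> ('b \<Rightarrow> nat \<Rightarrow> nat) \<Rightarrow> bool" where
  "peculiar_cut r1 r2 fl fu \<longleftrightarrow>
     (\<forall>i\<in>Field r1. \<forall>j\<in>Field r1. (i, j) \<in> r1 \<and> i \<noteq> j \<longrightarrow> less_star (fl j) (fl i)) \<and>
     (\<forall>\<alpha>\<in>Field r2. \<forall>\<beta>\<in>Field r2. (\<alpha>, \<beta>) \<in> r2 \<and> \<alpha> \<noteq> \<beta> \<longrightarrow> less_star (fu \<alpha>) (fu \<beta>)) \<and>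
     (\<forall>i\<in>Field r1. \<forall>\<alpha>\<in>Field r2. less_star (fu \<alpha>) (fl i)) \<and>
     (\<forall>f. (\<forall>i\<in>Field r1. le_star f (fl i)) \<longrightarrow> (\<exists>\<alpha>\<in>Field r2. le_star f (fu \<alpha>))) \<and>
     (\<forall>f. (\<forall>\<alpha>\<in>Field r2. le_star (fu \<alpha>) f) \<longrightarrow> (\<exists>i\<in>Field r1. le_star (fl i) f))"

end

theory Submission
  imports Defs
begin

text \<open>Let \<open>f\<^sub>0 >* f\<^sub>1 >* \<dots>\<close> lie above fewer than \<open>\<b>\<close> functions \<open>f\<^sup>\<alpha>\<close>. For each \<open>\<alpha>\<close>,
  the point from which \<open>f\<^sup>\<alpha> \<le> f\<^sub>i\<close> holds is a function of \<open>i\<close>, and fewer than \<open>\<b>\<close> such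
  functions are dominated by a single \<open>k\<close>. The diagonal minimum
  \<open>h n = min {f\<^sub>i n | i \<le> n, k i \<le> n}\<close> is then \<open>\<le>*\<close> every \<open>f\<^sub>i\<close> and \<open>\<ge>*\<close> every \<open>f\<^sup>\<alpha>\<close>,
  so by (\<open>\<epsilon>\<close>) some \<open>f\<^sub>i \<le>* h \<le>* f\<^sub>i\<^sub>+\<^sub>1 <* f\<^sub>i\<close>, which is absurd.\<close>

lemma le_star_iff_eventually: "le_star f g \<longleftrightarrow> (\<forall>\<^sub>F n in sequentially. f n \<le> g n)"
  unfolding le_star_def cofinite_eq_sequentially[symmetric] eventually_cofinite by simp

lemma less_star_iff_eventually: "less_star f g \<longleftrightarrow> (\<forall>\<^sub>F n in sequentially. f n < g n)"
  unfolding less_star_def cofinite_eq_sequentially[symmetric] eventually_cofinite by simp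

lemma less_star_imp_le_star: "less_star f g \<Longrightarrow> le_star f g"
  unfolding le_star_iff_eventually less_star_iff_eventually
  by (auto elim: eventually_mono)

lemma le_star_trans: "le_star f g \<Longrightarrow> le_star g h \<Longrightarrow> le_star f h"
  unfolding le_star_iff_eventually
  by (auto elim: eventually_elim2)

lemma not_le_star_if_less_star: "less_star g f \<Longrightarrow> \<not> le_star f g"
  unfolding le_star_iff_eventually less_star_iff_eventually
proof
  assume "\<forall>\<^sub>F n in sequentially. g n < f n" and "\<forall>\<^sub>F n in sequentially. f n \<le> g n"
  then have "\<forall>\<^sub>F n in sequentially. False"
    by eventually_elim simp
  then show False
    by simp
qed

lemma bounded_if_card_of_ordLeq_less_than_b:
  assumes "less_than_b \<kappa>" and "(card_of G, \<kappa>) \<in> ordLeq"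
  shows "\<not> unbounded_family G"
proof
  assume "unbounded_family G"
  then have "(\<kappa>, card_of G) \<in> ordLess"
    using \<open>less_than_b \<kappa>\<close> unfolding less_than_b_def by blast
  with \<open>(card_of G, \<kappa>) \<in> ordLeq\<close> show False
    using not_ordLess_ordLeq by blast
qed

lemma le_star_interpolant:
  fixes fl :: "nat \<Rightarrow> nat \<Rightarrow> nat" and F :: "(nat \<Rightarrow> nat) set"
  assumes below: "\<And>f i. f \<in> F \<Longrightarrow> le_star f (fl i)"
    and small: "\<And>G. (card_of G, card_of F) \<in> ordLeq \<Longrightarrow> \<not> unbounded_family G"
  shows "\<exists>h. (\<forall>f\<in>F. le_star f h) \<and> (\<forall>i. le_star h (fl i))"
proof -
  have "\<forall>f\<in>F. \<forall>i. \<exists>N. \<forall>n\<ge>N. f n \<le> fl i n"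
    using below unfolding le_star_iff_eventually eventually_sequentially by blast
  then obtain t where t: "\<And>f i n. f \<in> F \<Longrightarrow> t f i \<le> n \<Longrightarrow> f n \<le> fl i n"
    by metis
  have "\<not> unbounded_family (t ` F)"
    using small card_of_image by blast
  then obtain k where k: "\<And>f. f \<in> F \<Longrightarrow> le_star (t f) k"
    unfolding unbounded_family_def by blast
  define S where "S n = {i. max i (k i) \<le> n}" for n
  define h where "h n = (INF i\<in>S n. fl i n)" for n
  have "le_star h (fl i)" for i
    unfolding le_star_iff_eventually eventually_sequentially
    by (auto simp: h_def S_def intro!: exI[of _ "max i (k i)"] cINF_lower)
  moreover have "le_star f h" if "f \<in> F" for f
  proof -
    obtain N where N: "\<And>i. i \<ge> N \<Longrightarrow> t f i \<le> k i"
      using k[OF \<open>f \<in> F\<close>] unfolding le_star_iff_eventually eventually_sequentially by blast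
    define M where "M = Max (t f ` {..<N})"
    have "f n \<le> h n" if n: "max (k 0) M \<le> n" for n
    proof -
      have "0 \<in> S n"
        using n by (simp add: S_def)
      moreover have "f n \<le> fl i n" if "i \<in> S n" for i
      proof (rule t[OF \<open>f \<in> F\<close>])
        show "t f i \<le> n"
        proof (cases "i < N")
          case True
          then have "t f i \<le> M" by (simp add: M_def)
          then show ?thesis using n by simp
        next
          case False
          then show ?thesis using N[of i] \<open>i \<in> S n\<close> by (simp add: S_def)
        qed
      qed
      ultimately show ?thesis
        unfolding h_def by (blast intro: cINF_greatest)
    qed
    then show ?thesis
      unfolding le_star_iff_eventually eventually_sequentially by blast
  qed
  ultimately show ?thesis by blast
qed

theorem proposition2p10:
  fixes \<kappa>2 :: "'k rel"
  assumes "Card_order \<kappa>2" and "Cinfinite \<kappa>2" and "regularCard \<kappa>2"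
    and "less_than_b \<kappa>2"
  shows "\<not> (\<exists>(fl :: nat \<Rightarrow> nat \<Rightarrow> nat) (fu :: 'k \<Rightarrow> nat \<Rightarrow> nat). peculiar_cut natLeq \<kappa>2 fl fu)"
proof
  assume "\<exists>(fl :: nat \<Rightarrow> nat \<Rightarrow> nat) (fu :: 'k \<Rightarrow> nat \<Rightarrow> nat). peculiar_cut natLeq \<kappa>2 fl fu"
  then obtain fl :: "nat \<Rightarrow> nat \<Rightarrow> nat" and fu :: "'k \<Rightarrow> nat \<Rightarrow> nat"
    where cut: "peculiar_cut natLeq \<kappa>2 fl fu" by blast
  have decreasing: "less_star (fl (Suc i)) (fl i)" for i
    using cut unfolding peculiar_cut_def Field_natLeq by (auto simp: natLeq_def)
  have below: "le_star f (fl i)" if "f \<in> fu ` Field \<kappa>2" for f i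
    using cut that less_star_imp_le_star unfolding peculiar_cut_def Field_natLeq by blast
  have above_some_fl: "\<exists>i. le_star (fl i) h" if "\<forall>f\<in>fu ` Field \<kappa>2. le_star f h" for h
    using cut that unfolding peculiar_cut_def Field_natLeq by blast
  have "(card_of (fu ` Field \<kappa>2), \<kappa>2) \<in> ordLeq"
    using card_of_image card_of_Field_ordIso[OF \<open>Card_order \<kappa>2\<close>] ordLeq_ordIso_trans by blast
  then have small: "\<not> unbounded_family G" if "(card_of G, card_of (fu ` Field \<kappa>2)) \<in> ordLeq" for G
    using bounded_if_card_of_ordLeq_less_than_b[OF \<open>less_than_b \<kappa>2\<close>] that ordLeq_transitive
    by blast
  obtain h where "\<forall>f\<in>fu ` Field \<kappa>2. le_star f h" and h_below: "\<And>i. le_star h (fl i)"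
    using le_star_interpolant[of "fu ` Field \<kappa>2" fl, OF below small] by blast
  then obtain i where "le_star (fl i) h"
    using above_some_fl by blast
  then have "le_star (fl i) (fl (Suc i))"
    using h_below le_star_trans by blast
  then show False
    using not_le_star_if_less_star[OF decreasing] by blast
qed

end
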